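(* Let $L\subset L(p,1)$ be a framed oriented link with diagram $D$, augmented fundamental rack $R(D)$ and automorphism $A$ as in the setup, and let $X$ be a finite rack. Suppose $f\colon R(D)\to X$ satisfies $f(x\triangleright y)=f(x)\triangleright f(y)$ for all $x,y\in R(D)$. Then for all $z,w\in R(D)$: if $f(A^k(z))=f(A^k(w))$ for all $0\le k\le p-1$, then $f(A^k(z))=f(A^k(w))$ for all $k\in\mathbb{N}$.
   Context: A rack is a nonempty set with a binary operation $\triangleright$ such that (R1) for all $x,y$ there is a unique $z$ with $z\triangleright y=x$, and (R2) $(x\triangleright y)\triangleright z=(x\triangleright z)\triangleright(y\triangleright z)$. Write $t\triangleright\overline y$ for the unique $z$ with $z\triangleright y=t$, $t\triangleright y^{\pm1}$ for $t\triangleright y$ resp. $t\triangleright\overline y$; iterated expressions are parenthesized from the left. Setup: $L(p,1)$ is $p$-surgery on an unknot $U\subset S^3$ drawn with $p$ positive kinks; the diagram $D$ of $L\cup U$ has $d\ge 0$ strands of $L$ passing through the disk bounded by $U$, $m$ crossings with both strands in $L$, arcs of $L$ labelled $x_1,\dots,x_{m+d}$ where for $i\le d$ the arc $x_i$ becomes $x_{m+i}$ upon passing under the arc $a$ of $U$; $\epsilon_i\in\{\pm1\}$ is $1$ if $x_i$ follows $x_{m+i}$ in the orientation of $L$ and $-1$ otherwise; crossing relations are $x_i\triangleright x_j=x_l$ for over-arc $x_j$, under-arc $x_i$ on its right and $x_l$ on its left. $R(D)$ is the rack with general presentation (generators $x_i$ primary, $a$ operator; the operator group acts on itself by conjugation)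 $[\{x_1,\dots,x_{m+d}\},\{a\}:\{\text{crossing relations},\ x_i^a=x_{m+i}\ (1\le i\le d)\},\{a^p\equiv x_d^{\epsilon_d}\cdots x_1^{\epsilon_1}\}]$ if $d>0$ and $[\{x_1,\dots,x_m\},\{a\}:\{\text{crossing relations}\},\{a^p\equiv1\}]$ if $d=0$. $A\colon R(D)\to R(D)$ is the rack automorphism $A(x)=x^a$, and $F(x)=x\triangleright x_d^{\epsilon_d}\triangleright\cdots\triangleright x_1^{\epsilon_1}$ (if $d>0$), $F=\mathrm{id}$ (if $d=0$); one has $A^p=F$. *)

theory Defs
  imports Main
begin

definition is_rack :: "('a \<Rightarrow> 'a \<Rightarrow> 'a) \<Rightarrow> bool" where
  "is_rack op \<longleftrightarrow> (\<forall>x y. \<exists>!z. op z y = x) \<and>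
     (\<forall>x y z. op (op x y) z = op (op x z) (op y z))"

definition rack_inv_op :: "('a \<Rightarrow> 'a \<Rightarrow> 'a) \<Rightarrow> 'a \<Rightarrow> 'a \<Rightarrow> 'a" where
  "rack_inv_op op t y = (THE z. op z y = t)"

definition rack_act :: "('a \<Rightarrow> 'a \<Rightarrow> 'a) \<Rightarrow> 'a \<Rightarrow> 'a \<Rightarrow> int \<Rightarrow> 'a" where
  "rack_act op t y e = (if e = 1 then op t y else rack_inv_op op t y)"

text \<open>rack_Fseq op x eps k t = t \<triangleright> x_k^{eps_k} \<triangleright> ... \<triangleright> x_1^{eps_1}
  (parenthesized from the left).\<close>
fun rack_Fseq :: "('a \<Rightarrow> 'a \<Rightarrow> 'a) \<Rightarrow> (nat \<Rightarrow> 'a) \<Rightarrow> (nat \<Rightarrow> int) \<Rightarrow> nat \<Rightarrow> 'a \<Rightarrow> 'a" where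
  "rack_Fseq op x eps 0 t = t"
| "rack_Fseq op x eps (Suc k) t = rack_Fseq op x eps k (rack_act op t (x (Suc k)) (eps (Suc k)))"

definition rack_hom :: "('a \<Rightarrow> 'a \<Rightarrow> 'a) \<Rightarrow> ('b \<Rightarrow> 'b \<Rightarrow> 'b) \<Rightarrow> ('a \<Rightarrow> 'b) \<Rightarrow> bool" where
  "rack_hom opR opX f \<longleftrightarrow> (\<forall>x y. f (opR x y) = opX (f x) (f y))"

definition rack_aut :: "('a \<Rightarrow> 'a \<Rightarrow> 'a) \<Rightarrow> ('a \<Rightarrow> 'a) \<Rightarrow> bool" where
  "rack_aut op A \<longleftrightarrow> bij A \<and> rack_hom op op A"

end

theory Submission
  imports Defs
begin

text \<open>Since \<open>A\<^sup>p = F\<close> and \<open>F\<close> is built from the rack operation and its right inverse,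
  \<open>f \<circ> A\<^sup>p\<close> factors through \<open>f\<close>. Hence \<open>f (A\<^sup>k z)\<close> determines \<open>f (A\<^sup>k\<^sup>+\<^sup>p z)\<close>,
  and agreement on \<open>k < p\<close> propagates to all \<open>k\<close> by strong induction.\<close>

lemma rack_inv_op_right:
  assumes "is_rack op"
  shows "op (rack_inv_op op t y) y = t"
  using assms unfolding is_rack_def rack_inv_op_def by (metis (mono_tags, lifting) theI')

lemma rack_inv_op_unique:
  assumes "is_rack op" and "op z y = t"
  shows "rack_inv_op op t y = z"
  using assms unfolding is_rack_def rack_inv_op_def by (metis (mono_tags, lifting) the_equality)

lemma rack_hom_inv_op:
  assumes R: "is_rack opR" and X: "is_rack opX" and f: "rack_hom opR opX f"
  shows "f (rack_inv_op opR t y) = rack_inv_op opX (f t) (f y)"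
proof (rule rack_inv_op_unique[OF X, symmetric])
  show "opX (f (rack_inv_op opR t y)) (f y) = f t"
    using f rack_inv_op_right[OF R] unfolding rack_hom_def by metis
qed

lemma rack_hom_act:
  assumes "is_rack opR" and "is_rack opX" and "rack_hom opR opX f"
  shows "f (rack_act opR t y e) = rack_act opX (f t) (f y) e"
  using assms rack_hom_inv_op[OF assms] unfolding rack_act_def rack_hom_def by simp

lemma rack_hom_Fseq:
  assumes "is_rack opR" and "is_rack opX" and "rack_hom opR opX f"
  shows "f (rack_Fseq opR x eps n t) = rack_Fseq opX (f \<circ> x) eps n (f t)"
  using assms by (induction n arbitrary: t) (simp_all add: rack_hom_act)

lemma funpow_agree_propagate:
  assumes factor: "\<And>u. f ((A ^^ p) u) = g (f u)"
    and p: "p \<ge> 1"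
    and base: "\<forall>k<p. f ((A ^^ k) z) = f ((A ^^ k) w)"
  shows "f ((A ^^ k) z) = f ((A ^^ k) w)"
proof (induction k rule: less_induct)
  case (less k)
  show ?case
  proof (cases "k < p")
    case True
    then show ?thesis using base by simp
  next
    case False
    then obtain j where k: "k = p + j" using le_Suc_ex not_less by blast
    have shift: "f ((A ^^ k) u) = g (f ((A ^^ j) u))" for u
      using factor[of "(A ^^ j) u"] by (simp add: k funpow_add)
    have "j < k" using k p by simp
    then show ?thesis using less shift by metis
  qed
qed

theorem lemma3:
  fixes opR :: "'r \<Rightarrow> 'r \<Rightarrow> 'r"
    and opX :: "'x::finite \<Rightarrow> 'x \<Rightarrow> 'x"
    and A :: "'r \<Rightarrow> 'r"
    and f :: "'r \<Rightarrow> 'x"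
    and p m d :: nat
    and x :: "nat \<Rightarrow> 'r"
    and eps :: "nat \<Rightarrow> int"
  assumes "is_rack opR"
    and "is_rack opX"
    and "p \<ge> 1"
    and "\<forall>i\<in>{1..d}. eps i = 1 \<or> eps i = -1"
    and "rack_aut opR A"
    and "\<forall>i\<in>{1..d}. A (x i) = x (m + i)"
    and "A ^^ p = rack_Fseq opR x eps d"
    and "rack_hom opR opX f"
  shows "\<forall>z w. (\<forall>k<p. f ((A ^^ k) z) = f ((A ^^ k) w)) \<longrightarrow>
               (\<forall>k. f ((A ^^ k) z) = f ((A ^^ k) w))"
proof (intro allI impI)
  fix z w k
  assume agree: "\<forall>k<p. f ((A ^^ k) z) = f ((A ^^ k) w)"
  have "f ((A ^^ p) u) = rack_Fseq opX (f \<circ> x) eps d (f u)" for u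
    using rack_hom_Fseq[OF assms(1,2,8)] assms(7) by simp
  then show "f ((A ^^ k) z) = f ((A ^^ k) w)"
    by (rule funpow_agree_propagate[OF _ assms(3) agree])
qed

end
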